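(* Let $\varphi:\Lambda\to\Gamma$ be a regular covering map of finite simplicial graphs, and let $x\in A_{\Lambda^+}$ with $\beta(x)=1$. Then for any word $w$ in the generators $V\Lambda^+$ representing $x$, there is a word $w'$, obtained from $w$ by finitely many exchanges, which represents the trivial element of $A_{\Lambda^+}$.
   Context: $A_\Gamma$ is the right-angled Artin group with generators $V\Gamma$ and relations $[a,b]=1$ for edges. A covering map $\varphi:\Lambda\to\Gamma$ is a surjective simplicial map mapping the neighbours of each vertex $u$ bijectively onto the neighbours of $\varphi(u)$; regular means the group of graph automorphisms $\mu$ of $\Lambda$ with $\varphi\mu=\varphi$ acts transitively on each fiber. $\Lambda^+$ is the graph with the same vertex set as $\Lambda$ in which $\{x,y\}$ is an edge iff either $\{\varphi(x),\varphi(y)\}$ is an edge of $\Gamma$ or $\varphi(x)=\varphi(y)$ (and $x\neq y$). $\beta:A_{\Lambda^+}\to A_\Gamma$ is the homomorphism $u\mapsto\varphi(u)$. Two vertices $u,u'$ are deck-equivalent if $\varphi(u)=\varphi(u')$. For a word $u_1^{\epsilon_1}\cdots u_k^{\epsilon_k}$ ($u_i\in V\Lambda^+$, $\epsilon_i=\pm1$), an exchange replaces one letter $u_i^{\epsilon_i}$ by $\tilde u_i^{\epsilon_i}$ where $\tilde u_i$ is deck-equivalent to $u_i$. *)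

theory Defs
  imports Main
begin

definition simple_graph :: "'v set \<Rightarrow> ('v \<Rightarrow> 'v \<Rightarrow> bool) \<Rightarrow> bool" where
  "simple_graph V E \<longleftrightarrow> finite V \<and> (\<forall>x y. E x y \<longrightarrow> x \<in> V \<and> y \<in> V)
     \<and> (\<forall>x y. E x y \<longrightarrow> E y x) \<and> (\<forall>x. \<not> E x x)"

definition covering_map ::
  "'a set \<Rightarrow> ('a \<Rightarrow> 'a \<Rightarrow> bool) \<Rightarrow> 'b set \<Rightarrow> ('b \<Rightarrow> 'b \<Rightarrow> bool) \<Rightarrow> ('a \<Rightarrow> 'b) \<Rightarrow> bool" where
  "covering_map VL EL VG EG \<phi> \<longleftrightarrow>
     \<phi> ` VL = VG \<and>
     (\<forall>x y. EL x y \<longrightarrow> EG (\<phi> x) (\<phi> y)) \<and>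
     (\<forall>u\<in>VL. bij_betw \<phi> {v. EL u v} {w. EG (\<phi> u) w})"

definition deck_transformation ::
  "'a set \<Rightarrow> ('a \<Rightarrow> 'a \<Rightarrow> bool) \<Rightarrow> ('a \<Rightarrow> 'b) \<Rightarrow> ('a \<Rightarrow> 'a) \<Rightarrow> bool" where
  "deck_transformation VL EL \<phi> \<mu> \<longleftrightarrow>
     bij_betw \<mu> VL VL \<and>
     (\<forall>x\<in>VL. \<forall>y\<in>VL. EL x y \<longleftrightarrow> EL (\<mu> x) (\<mu> y)) \<and>
     (\<forall>x\<in>VL. \<phi> (\<mu> x) = \<phi> x)"

definition regular_covering ::
  "'a set \<Rightarrow> ('a \<Rightarrow> 'a \<Rightarrow> bool) \<Rightarrow> 'b set \<Rightarrow> ('b \<Rightarrow> 'b \<Rightarrow> bool) \<Rightarrow> ('a \<Rightarrow> 'b) \<Rightarrow> bool" where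
  "regular_covering VL EL VG EG \<phi> \<longleftrightarrow>
     covering_map VL EL VG EG \<phi> \<and>
     (\<forall>u\<in>VL. \<forall>u'\<in>VL. \<phi> u = \<phi> u' \<longrightarrow>
        (\<exists>\<mu>. deck_transformation VL EL \<phi> \<mu> \<and> \<mu> u = u'))"

definition plus_edge :: "'a set \<Rightarrow> ('b \<Rightarrow> 'b \<Rightarrow> bool) \<Rightarrow> ('a \<Rightarrow> 'b) \<Rightarrow> 'a \<Rightarrow> 'a \<Rightarrow> bool" where
  "plus_edge VL EG \<phi> x y \<longleftrightarrow> x \<in> VL \<and> y \<in> VL \<and> x \<noteq> y \<and>
     (EG (\<phi> x) (\<phi> y) \<or> \<phi> x = \<phi> y)"

text \<open>Words: lists of letters (generator, sign); True = exponent +1, False = -1.\<close>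
type_synonym 'v word = "('v \<times> bool) list"

text \<open>Equality in the right-angled Artin group A_E: the congruence on words
  generated by free cancellation and commutation of adjacent letters whose
  generators span an edge.\<close>
inductive raag_eq :: "('v \<Rightarrow> 'v \<Rightarrow> bool) \<Rightarrow> 'v word \<Rightarrow> 'v word \<Rightarrow> bool" for E where
  refl: "raag_eq E w w"
| sym: "raag_eq E w w' \<Longrightarrow> raag_eq E w' w"
| trans: "raag_eq E w1 w2 \<Longrightarrow> raag_eq E w2 w3 \<Longrightarrow> raag_eq E w1 w3"
| cancel: "raag_eq E (xs @ [(a, e), (a, \<not> e)] @ ys) (xs @ ys)"
| commute: "E a c \<Longrightarrow> raag_eq E (xs @ [(a, e), (c, f)] @ ys) (xs @ [(c, f), (a, e)] @ ys)"

definition beta_word :: "('a \<Rightarrow> 'b) \<Rightarrow> 'a word \<Rightarrow> 'b word" where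
  "beta_word \<phi> w = map (\<lambda>(u, e). (\<phi> u, e)) w"

definition exchange :: "'a set \<Rightarrow> ('a \<Rightarrow> 'b) \<Rightarrow> 'a word \<Rightarrow> 'a word \<Rightarrow> bool" where
  "exchange VL \<phi> w w' \<longleftrightarrow>
     (\<exists>xs ys u u' e. w = xs @ [(u, e)] @ ys \<and> w' = xs @ [(u', e)] @ ys \<and>
        u' \<in> VL \<and> \<phi> u' = \<phi> u)"

end

theory Submission
  imports Defs
begin

text \<open>Choose a section \<open>s\<close> of \<open>\<phi>\<close>. Since \<open>\<phi> \<circ> s = id\<close>, distinct vertices of \<open>\<Gamma>\<close> have
  distinct lifts, so every edge of \<open>\<Gamma>\<close> lifts to an edge of \<open>\<Lambda>\<^sup>+\<close> and \<open>s\<close> induces a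
  homomorphism \<open>A\<^sub>\<Gamma> \<rightarrow> A\<^bsub>\<Lambda>\<^sup>+\<^esub>\<close>. Exchanging every letter \<open>u\<close> of \<open>w\<close> for \<open>s (\<phi> u)\<close> turns \<open>w\<close>
  into the \<open>s\<close>-image of \<open>\<beta>(w)\<close>, which is trivial because \<open>\<beta>(w)\<close> is.\<close>

lemma beta_word_comp: "beta_word g (beta_word f w) = beta_word (g \<circ> f) w"
  unfolding beta_word_def by auto

lemma raag_eq_beta_word:
  assumes "raag_eq E v v'" and "\<And>a c. E a c \<Longrightarrow> E' (f a) (f c)"
  shows "raag_eq E' (beta_word f v) (beta_word f v')"
  using assms(1) unfolding beta_word_def
proof (induction rule: raag_eq.induct)
  case (refl w)
  then show ?case by (rule raag_eq.refl)
next
  case (sym w w')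
  then show ?case by (blast intro: raag_eq.sym)
next
  case (trans w1 w2 w3)
  then show ?case by (blast intro: raag_eq.trans)
next
  case (cancel xs a e ys)
  then show ?case using raag_eq.cancel[of E' _ "f a" e] by simp
next
  case (commute a c xs e e' ys)
  then show ?case using raag_eq.commute[of E' "f a" "f c" _ e e'] assms(2) by simp
qed

lemma exchange_Cons:
  assumes "exchange VL \<phi> w w'"
  shows "exchange VL \<phi> (x # w) (x # w')"
  using assms unfolding exchange_def by (metis append_Cons)

lemma exchanges_Cons:
  assumes "(exchange VL \<phi>)\<^sup>*\<^sup>* w w'"
  shows "(exchange VL \<phi>)\<^sup>*\<^sup>* (x # w) (x # w')"
  using assms
proof (induction rule: rtranclp_induct)
  case base
  then show ?case by simp
next
  case (step w'' w')
  then show ?case by (meson exchange_Cons rtranclp.rtrancl_into_rtrancl)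
qed

lemma exchanges_beta_word:
  assumes "\<And>u. u \<in> set (map fst w) \<Longrightarrow> g u \<in> VL \<and> \<phi> (g u) = \<phi> u"
  shows "(exchange VL \<phi>)\<^sup>*\<^sup>* w (beta_word g w)"
  using assms
proof (induction w)
  case Nil
  then show ?case by (simp add: beta_word_def)
next
  case (Cons x w)
  obtain u e where x: "x = (u, e)" by fastforce
  have "(exchange VL \<phi>)\<^sup>*\<^sup>* (x # w) (x # beta_word g w)"
    using Cons by (intro exchanges_Cons) simp
  moreover have "exchange VL \<phi> (x # beta_word g w) ((g u, e) # beta_word g w)"
    unfolding exchange_def x using Cons.prems[of u] x
    by (intro exI[of _ "[]"] exI[of _ "beta_word g w"]) auto
  ultimately show ?case by (simp add: x beta_word_def)
qed

lemma covering_map_section: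
  assumes "covering_map VL EL VG EG \<phi>"
  obtains s where "\<And>b. b \<in> VG \<Longrightarrow> s b \<in> VL \<and> \<phi> (s b) = b"
proof
  fix b assume "b \<in> VG"
  then have "b \<in> \<phi> ` VL"
    using assms unfolding covering_map_def by blast
  then show "inv_into VL \<phi> b \<in> VL \<and> \<phi> (inv_into VL \<phi> b) = b"
    by (simp add: f_inv_into_f inv_into_into)
qed

lemma plus_edge_section:
  assumes "simple_graph VG EG" and "EG a c"
    and "\<And>b. b \<in> VG \<Longrightarrow> s b \<in> VL \<and> \<phi> (s b) = b"
  shows "plus_edge VL EG \<phi> (s a) (s c)"
proof -
  have "a \<in> VG" "c \<in> VG" "a \<noteq> c"
    using assms(1,2) unfolding simple_graph_def by metis+
  then show ?thesis using assms(2,3) unfolding plus_edge_def by metis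
qed

theorem lemma7p2:
  fixes VL :: "'a set" and EL :: "'a \<Rightarrow> 'a \<Rightarrow> bool"
    and VG :: "'b set" and EG :: "'b \<Rightarrow> 'b \<Rightarrow> bool"
    and \<phi> :: "'a \<Rightarrow> 'b" and w :: "'a word"
  assumes "simple_graph VL EL" and "simple_graph VG EG"
    and "regular_covering VL EL VG EG \<phi>"
    and "set (map fst w) \<subseteq> VL"
    and "raag_eq EG (beta_word \<phi> w) []"
  shows "\<exists>w'. (exchange VL \<phi>)\<^sup>*\<^sup>* w w' \<and> raag_eq (plus_edge VL EG \<phi>) w' []"
proof -
  have covering: "covering_map VL EL VG EG \<phi>"
    using assms(3) unfolding regular_covering_def by blast
  then obtain s where s: "\<And>b. b \<in> VG \<Longrightarrow> s b \<in> VL \<and> \<phi> (s b) = b"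
    using covering_map_section by blast
  have "\<phi> ` VL = VG"
    using covering unfolding covering_map_def by blast
  then have "(exchange VL \<phi>)\<^sup>*\<^sup>* w (beta_word (s \<circ> \<phi>) w)"
    using assms(4) s by (intro exchanges_beta_word) auto
  moreover have "raag_eq (plus_edge VL EG \<phi>) (beta_word s (beta_word \<phi> w)) (beta_word s [])"
    using assms(5) plus_edge_section[OF assms(2) _ s] by (rule raag_eq_beta_word)
  moreover have "beta_word s [] = []"
    by (simp add: beta_word_def)
  ultimately show ?thesis
    by (metis beta_word_comp)
qed

end
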